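(* Let $a,b>0$, $s\in(0,1)$ and $\lambda>0$. Let $\eta$ have prior distribution $F_{a,b}=(1-s)\delta_1+s\,\Pi_{a,b}$, where $\Pi_{a,b}$ is the RSB distribution with density $\pi_{\rm RSB}(\cdot;a,b)$, and let $y\mid\eta\sim\mathrm{Po}(\eta\lambda)$. Define the posterior probability $$P_{a,b}(\varepsilon;\lambda):=\Pr(\eta<\varepsilon\mid y=0;a,b)=\frac{\int_{(0,\varepsilon)}e^{-\lambda\eta}\,F_{a,b}(d\eta)}{\int_{(0,\infty)}e^{-\lambda\eta}\,F_{a,b}(d\eta)}.$$ Then (i) for every $\varepsilon>0$, $\lambda\mapsto P_{a,b}(\varepsilon;\lambda)$ is non-decreasing on $(0,\infty)$; and (ii) if $0<a<1<a'<\infty$ and $s\in(0,1]$, then for every $\lambda>0$, $P_{a,b}(\varepsilon;\lambda)/P_{a',b}(\varepsilon;\lambda)\to\infty$ as $\varepsilon\to0$.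
   Context: For $a,b>0$, $\pi_{\rm RSB}(u;a,b)=\frac{1}{B(a,b)}\frac{\{\log(1+u)\}^{a-1}}{1+u}\frac{1}{\{1+\log(1+u)\}^{a+b}}$, $u>0$. $\delta_1$ is the point mass at $1$. $\mathrm{Po}(\mu)$ is the Poisson distribution with mean $\mu$, so the likelihood of $y=0$ given $\eta$ is $e^{-\lambda\eta}$. *)

theory Defs
  imports "HOL-Analysis.Analysis"
begin

definition pi_RSB :: "real \<Rightarrow> real \<Rightarrow> real \<Rightarrow> real" where
  "pi_RSB a b u = (if u > 0 then
      (1 / Beta a b) * (ln (1 + u)) powr (a - 1) / (1 + u) / (1 + ln (1 + u)) powr (a + b)
    else 0)"

text \<open>Integral of exp(-lambda eta) over a set A against the prior
  F = (1-s) delta_1 + s Pi_{a,b}, with Pi_{a,b} having Lebesgue density pi_RSB.\<close>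
definition prior_lap :: "real \<Rightarrow> real \<Rightarrow> real \<Rightarrow> real \<Rightarrow> real set \<Rightarrow> real" where
  "prior_lap a b s lam A =
     (1 - s) * (if (1::real) \<in> A then exp (- lam * 1) else 0)
     + s * (LINT u:A|lborel. exp (- lam * u) * pi_RSB a b u)"

definition post_prob :: "real \<Rightarrow> real \<Rightarrow> real \<Rightarrow> real \<Rightarrow> real \<Rightarrow> real" where
  "post_prob a b s eps lam = prior_lap a b s lam {0<..<eps} / prior_lap a b s lam {0<..}"

end

theory Submission
  imports Defs "HOL-Real_Asymp.Real_Asymp"
begin

text \<open>
  (i) Raising \<open>\<lambda>\<close> to \<open>\<lambda>' \<ge> \<lambda>\<close> multiplies the likelihood \<open>exp (- \<lambda> \<eta>)\<close> by
  \<open>exp (- (\<lambda>' - \<lambda>) \<eta>)\<close>, which is \<open>\<ge> c\<close> on \<open>(0, \<epsilon>)\<close> and \<open>\<le> c\<close> on \<open>[\<epsilon>, \<infinity>)\<close>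
  for \<open>c = exp (- (\<lambda>' - \<lambda>) \<epsilon>)\<close>. So the prior Laplace masses \<open>N\<close> of \<open>(0, \<epsilon>)\<close> and
  \<open>M\<close> of \<open>[\<epsilon>, \<infinity>)\<close> satisfy \<open>N' \<ge> c N\<close> and \<open>M' \<le> c M\<close>, whence
  \<open>N / (N + M) \<le> N' / (N' + M')\<close>.

  (ii) As \<open>u / 2 \<le> ln (1 + u) \<le> u\<close> on \<open>(0, 1]\<close>, the RSB density is comparable to
  \<open>u powr (a - 1)\<close> near \<open>0\<close>. For \<open>\<epsilon> < 1\<close> the atom at \<open>1\<close> does not contribute, so
  \<open>P\<^sub>a\<^sub>,\<^sub>b(\<epsilon>; \<lambda>)\<close> is comparable to \<open>\<epsilon> powr a\<close> and the ratio is at least a constant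
  times \<open>\<epsilon> powr (a - a')\<close>; only \<open>a < a'\<close> is needed.
\<close>

lemma Beta_pos: "0 < a \<Longrightarrow> 0 < b \<Longrightarrow> 0 < Beta a (b::real)"
  by (simp add: Beta_def)

lemma set_integrable_lborel_of_integrable_on:
  fixes f :: "real \<Rightarrow> real"
  assumes "f integrable_on S" "\<And>x. x \<in> S \<Longrightarrow> 0 \<le> f x"
    and [measurable]: "f \<in> borel_measurable borel" "S \<in> sets borel"
  shows "set_integrable lborel S f"
proof -
  have "set_integrable lebesgue S f"
    using assms(1,2) by (rule nonnegative_absolutely_integrable_1)
  then have "integrable (completion lborel) (\<lambda>x. indicator S x *\<^sub>R f x)"
    unfolding set_integrable_def .
  moreover have "(\<lambda>x. indicator S x *\<^sub>R f x) \<in> borel_measurable lborel"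
    by measurable
  ultimately show ?thesis
    unfolding set_integrable_def using integrable_completion by blast
qed

lemma set_integral_powr_Ioo:
  fixes a e :: real
  assumes "0 < a" "0 \<le> e"
  shows "set_integrable lborel {0<..<e} (\<lambda>u. u powr (a - 1))"
    and "(LINT u:{0<..<e}|lborel. u powr (a - 1)) = e powr a / a"
proof -
  have int: "((\<lambda>u. u powr (a - 1)) has_integral e powr a / a) {0<..<e}"
    using has_integral_powr_from_0[of "a - 1" e] assms by (simp add: has_integral_Icc_iff_Ioo)
  show si: "set_integrable lborel {0<..<e} (\<lambda>u. u powr (a - 1))"
    by (rule set_integrable_lborel_of_integrable_on) (use int in \<open>auto simp: integrable_on_def\<close>)
  show "(LINT u:{0<..<e}|lborel. u powr (a - 1)) = e powr a / a"
    using set_borel_integral_eq_integral(2)[OF si] int by (simp add: integral_unique)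
qed

lemma ln_add_one_ge_half:
  fixes u :: real
  assumes "0 \<le> u" "u \<le> 1"
  shows "u / 2 \<le> ln (1 + u)"
proof -
  have "ln (1 / (1 + u)) \<le> 1 / (1 + u) - 1"
    using assms by (intro ln_le_minus_one) auto
  then have "u / (1 + u) \<le> ln (1 + u)"
    using assms by (simp add: ln_div field_simps)
  moreover have "u / 2 \<le> u / (1 + u)"
    using assms by (auto simp: field_simps intro: mult_left_le)
  ultimately show ?thesis by linarith
qed

lemma powr_comparable:
  fixes k x y p :: real
  assumes "0 < k" "0 < x" "k * y \<le> x" "x \<le> y"
  shows "min 1 (k powr p) * y powr p \<le> x powr p"
    and "x powr p \<le> max 1 (k powr p) * y powr p"
proof -
  have y: "0 < y" using assms by linarith
  have ky: "(k * y) powr p = k powr p * y powr p"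
    using assms y by (simp add: powr_mult)
  have "min (y powr p) ((k * y) powr p) \<le> x powr p \<and> x powr p \<le> max (y powr p) ((k * y) powr p)"
  proof (cases "0 \<le> p")
    case True
    then show ?thesis using assms y by (auto intro: powr_mono2 simp: min_le_iff_disj le_max_iff_disj)
  next
    case False
    then show ?thesis using assms y by (auto intro: powr_mono2' simp: min_le_iff_disj le_max_iff_disj)
  qed
  moreover have "min 1 (k powr p) * y powr p = min (y powr p) ((k * y) powr p)"
    "max 1 (k powr p) * y powr p = max (y powr p) ((k * y) powr p)"
    using ky by (simp_all add: min_mult_distrib_right max_mult_distrib_right)
  ultimately show "min 1 (k powr p) * y powr p \<le> x powr p" "x powr p \<le> max 1 (k powr p) * y powr p"
    by auto
qed

lemma borel_measurable_pi_RSB [measurable]: "pi_RSB a b \<in> borel_measurable borel"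
  unfolding pi_RSB_def by measurable

lemma pi_RSB_nonneg: "0 < a \<Longrightarrow> 0 < b \<Longrightarrow> 0 \<le> pi_RSB a b u"
  unfolding pi_RSB_def using Beta_pos[of a b] by auto

lemma pi_RSB_eq:
  "0 < u \<Longrightarrow>
    pi_RSB a b u = ln (1 + u) powr (a - 1) / (Beta a b * (1 + u) * (1 + ln (1 + u)) powr (a + b))"
  unfolding pi_RSB_def by (simp add: field_simps)

lemma pi_RSB_near_zero:
  fixes a b :: real
  assumes "0 < a" "0 < b"
  obtains c C where "0 < c" "\<And>u. 0 < u \<Longrightarrow> u \<le> 1 \<Longrightarrow> c * u powr (a - 1) \<le> pi_RSB a b u"
    and "0 < C" "\<And>u. 0 < u \<Longrightarrow> u \<le> 1 \<Longrightarrow> pi_RSB a b u \<le> C * u powr (a - 1)"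
proof
  define B where "B = Beta a b"
  define m where "m = min 1 ((1/2) powr (a - 1))"
  define M where "M = max 1 ((1/2) powr (a - 1))"
  have B: "0 < B" using Beta_pos assms by (simp add: B_def)
  show "0 < m / (2 * 2 powr (a + b) * B)" "0 < M / B"
    using B by (simp_all add: m_def M_def)
  fix u :: real
  assume u: "0 < u" "u \<le> 1"
  define L where "L = ln (1 + u)"
  define D where "D = B * ((1 + u) * (1 + L) powr (a + b))"
  have L: "0 < L" "(1/2) * u \<le> L" "L \<le> u"
    using u ln_add_one_ge_half[of u] ln_add_one_self_le_self[of u] by (simp_all add: L_def)
  have pi: "pi_RSB a b u = L powr (a - 1) / D"
    using pi_RSB_eq u by (simp add: L_def D_def B_def mult.assoc)
  have D: "B \<le> D" "D \<le> 2 * 2 powr (a + b) * B"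
  proof -
    have "1 \<le> (1 + L) powr (a + b)" "(1 + L) powr (a + b) \<le> 2 powr (a + b)"
      using L u assms by (auto intro: ge_one_powr_ge_zero powr_mono2)
    then have "1 \<le> (1 + u) * (1 + L) powr (a + b)" "(1 + u) * (1 + L) powr (a + b) \<le> 2 * 2 powr (a + b)"
      using u mult_mono[of 1 "1 + u" 1 "(1 + L) powr (a + b)"]
        mult_mono[of "1 + u" 2 "(1 + L) powr (a + b)" "2 powr (a + b)"] by auto
    then show "B \<le> D" "D \<le> 2 * 2 powr (a + b) * B"
      unfolding D_def using B by (auto simp: mult.assoc mult_le_cancel_left1)
  qed
  have "m / (2 * 2 powr (a + b) * B) * u powr (a - 1) \<le> L powr (a - 1) / (2 * 2 powr (a + b) * B)"
    using powr_comparable(1)[of "1/2" L u "a - 1"] L B by (simp add: m_def divide_right_mono)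
  also have "\<dots> \<le> L powr (a - 1) / D"
    using D B by (intro divide_left_mono) auto
  finally show "m / (2 * 2 powr (a + b) * B) * u powr (a - 1) \<le> pi_RSB a b u"
    using pi by simp
  have "L powr (a - 1) / D \<le> L powr (a - 1) / B"
    using D B by (intro divide_left_mono) auto
  also have "\<dots> \<le> M / B * u powr (a - 1)"
    using powr_comparable(2)[of "1/2" L u "a - 1"] L B by (simp add: M_def divide_right_mono)
  finally show "pi_RSB a b u \<le> M / B * u powr (a - 1)"
    using pi by simp
qed

lemma pi_RSB_bounded_beyond_one:
  fixes a b :: real
  assumes "0 < a" "0 < b"
  obtains K where "\<And>u. 1 \<le> u \<Longrightarrow> pi_RSB a b u \<le> K"
proof
  fix u :: real
  assume u: "1 \<le> u"
  define L where "L = ln (1 + u)"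
  have B: "0 < Beta a b" using Beta_pos assms by simp
  have L: "ln 2 \<le> L" "0 < L" using u by (simp_all add: L_def)
  have Q: "1 \<le> (1 + L) powr (a + b)"
    using L assms by (intro ge_one_powr_ge_zero) auto
  have key: "L powr (a - 1) \<le> max 1 (ln 2 powr (a - 1)) * (1 + L) powr (a + b)"
  proof (cases "1 \<le> a")
    case True
    have "L powr (a - 1) \<le> (1 + L) powr (a - 1)"
      using True L by (intro powr_mono2) auto
    also have "\<dots> \<le> (1 + L) powr (a + b)"
      using assms L by (intro powr_mono) auto
    also have "\<dots> \<le> max 1 (ln 2 powr (a - 1)) * (1 + L) powr (a + b)"
      using Q mult_right_mono[of 1 "max 1 (ln 2 powr (a - 1))" "(1 + L) powr (a + b)"] by simp
    finally show ?thesis .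
  next
    case False
    have "L powr (a - 1) \<le> ln 2 powr (a - 1)"
      using False L by (intro powr_mono2') auto
    also have "\<dots> \<le> max 1 (ln 2 powr (a - 1)) * 1"
      by simp
    also have "\<dots> \<le> max 1 (ln 2 powr (a - 1)) * (1 + L) powr (a + b)"
      using Q by (intro mult_left_mono) auto
    finally show ?thesis .
  qed
  have BQ: "0 < Beta a b * (1 + L) powr (a + b)"
    using B Q by (intro mult_pos_pos) auto
  have "pi_RSB a b u = L powr (a - 1) / (Beta a b * (1 + L) powr (a + b) * (1 + u))"
    using pi_RSB_eq[of u a b] u by (simp add: L_def mult_ac)
  also have "\<dots> \<le> L powr (a - 1) / (Beta a b * (1 + L) powr (a + b))"
    using BQ u by (intro divide_left_mono) (auto simp: mult_le_cancel_left1)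
  also have "\<dots> \<le> max 1 (ln 2 powr (a - 1)) / Beta a b"
    using key B Q L by (simp add: divide_simps mult.commute)
  finally show "pi_RSB a b u \<le> max 1 (ln 2 powr (a - 1)) / Beta a b" .
qed

lemma set_integrable_exp_pi_RSB:
  fixes a b lam :: real
  assumes "0 < a" "0 < b" "0 < lam" "A \<subseteq> {0<..}" "A \<in> sets borel"
  shows "set_integrable lborel A (\<lambda>u. exp (- lam * u) * pi_RSB a b u)"
proof -
  obtain c C where "0 < c" "\<And>u. 0 < u \<Longrightarrow> u \<le> 1 \<Longrightarrow> c * u powr (a - 1) \<le> pi_RSB a b u"
    and C: "0 < C" "\<And>u. 0 < u \<Longrightarrow> u \<le> 1 \<Longrightarrow> pi_RSB a b u \<le> C * u powr (a - 1)"
    by (rule pi_RSB_near_zero[OF assms(1,2)]) (rule that)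
  obtain K where K: "\<And>u. 1 \<le> u \<Longrightarrow> pi_RSB a b u \<le> K"
    by (rule pi_RSB_bounded_beyond_one[OF assms(1,2)]) (rule that)
  have pi: "0 \<le> pi_RSB a b u" for u
    using pi_RSB_nonneg assms by simp
  have K0: "0 \<le> K"
    using K[of 1] pi[of 1] by simp
  have near: "set_integrable lborel {0<..<1} (\<lambda>u. exp (- lam * u) * pi_RSB a b u)"
  proof (rule set_integrable_bound[where f = "\<lambda>u. C * u powr (a - 1)"])
    show "set_integrable lborel {0<..<1} (\<lambda>u. C * u powr (a - 1))"
      using set_integral_powr_Ioo(1)[where a = a and e = 1] assms by simp
    show "set_borel_measurable lborel {0<..<1} (\<lambda>u. exp (- lam * u) * pi_RSB a b u)"
      unfolding set_borel_measurable_def by measurable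
    have "exp (- lam * u) * pi_RSB a b u \<le> 1 * (C * u powr (a - 1))" if "u \<in> {0<..<1}" for u
      using that assms pi C by (intro mult_mono) auto
    then show "AE u in lborel. u \<in> {0<..<1} \<longrightarrow>
        norm (exp (- lam * u) * pi_RSB a b u) \<le> norm (C * u powr (a - 1))"
      using pi C by auto
  qed
  have far: "set_integrable lborel {1..} (\<lambda>u. exp (- lam * u) * pi_RSB a b u)"
  proof (rule set_integrable_bound[where f = "\<lambda>u. K * exp (- lam * u)"])
    have "set_integrable lborel {1..} (\<lambda>u. exp (- lam * u))"
      by (rule set_integrable_lborel_of_integrable_on)
        (use integrable_on_exp_minus_to_infinity assms in auto)
    then show "set_integrable lborel {1..} (\<lambda>u. K * exp (- lam * u))"
      by simp
    show "set_borel_measurable lborel {1..} (\<lambda>u. exp (- lam * u) * pi_RSB a b u)"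
      unfolding set_borel_measurable_def by measurable
    have "exp (- lam * u) * pi_RSB a b u \<le> K * exp (- lam * u)" if "u \<in> {1..}" for u
      using that K[of u] by (simp add: mult.commute)
    then show "AE u in lborel. u \<in> {1..} \<longrightarrow>
        norm (exp (- lam * u) * pi_RSB a b u) \<le> norm (K * exp (- lam * u))"
      using pi K0 by auto
  qed
  have "{0<..} = {0<..<1} \<union> {1::real..}"
    by auto
  then have "set_integrable lborel {0<..} (\<lambda>u. exp (- lam * u) * pi_RSB a b u)"
    using set_integrable_Un[OF near far] by simp
  then show ?thesis
    by (rule set_integrable_subset) (use assms(4,5) in auto)
qed

lemma set_integral_exp_pi_RSB_nonneg:
  "0 < a \<Longrightarrow> 0 < b \<Longrightarrow> 0 \<le> (LINT u:A|lborel. exp (- lam * u) * pi_RSB a b u)"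
  unfolding set_lebesgue_integral_def
  by (rule Bochner_Integration.integral_nonneg) (simp add: pi_RSB_nonneg)

lemma laplace_pi_RSB_near_zero:
  fixes a b lam :: real
  assumes "0 < a" "0 < b" "0 < lam"
  obtains c C where "0 < c"
    "\<And>eps. 0 < eps \<Longrightarrow> eps \<le> 1 \<Longrightarrow>
      c * eps powr a \<le> (LINT u:{0<..<eps}|lborel. exp (- lam * u) * pi_RSB a b u)"
    and "0 < C" "\<And>eps. 0 < eps \<Longrightarrow> eps \<le> 1 \<Longrightarrow>
      (LINT u:{0<..<eps}|lborel. exp (- lam * u) * pi_RSB a b u) \<le> C * eps powr a"
proof -
  obtain c C where c: "0 < c" "\<And>u. 0 < u \<Longrightarrow> u \<le> 1 \<Longrightarrow> c * u powr (a - 1) \<le> pi_RSB a b u"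
    and C: "0 < C" "\<And>u. 0 < u \<Longrightarrow> u \<le> 1 \<Longrightarrow> pi_RSB a b u \<le> C * u powr (a - 1)"
    by (rule pi_RSB_near_zero[OF assms(1,2)]) (rule that)
  show ?thesis
  proof
    show "0 < exp (- lam) * c / a" "0 < C / a"
      using c C assms by simp_all
    fix eps :: real
    assume eps: "0 < eps" "eps \<le> 1"
    have int: "set_integrable lborel {0<..<eps} (\<lambda>u. exp (- lam * u) * pi_RSB a b u)"
      using assms by (intro set_integrable_exp_pi_RSB) auto
    note powr = set_integral_powr_Ioo[where a = a and e = eps]
    have "exp (- lam) * c / a * eps powr a = (LINT u:{0<..<eps}|lborel. exp (- lam) * c * u powr (a - 1))"
      using powr(2) eps assms by simp
    also have "\<dots> \<le> (LINT u:{0<..<eps}|lborel. exp (- lam * u) * pi_RSB a b u)"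
    proof (rule set_integral_mono)
      fix u assume u: "u \<in> {0<..<eps}"
      have "exp (- lam) \<le> exp (- lam * u)"
        using u eps assms by (simp add: mult_left_le)
      then show "exp (- lam) * c * u powr (a - 1) \<le> exp (- lam * u) * pi_RSB a b u"
        using c(1) c(2)[of u] u eps by (simp only: mult.assoc) (intro mult_mono; simp)
    qed (use int powr eps assms in simp_all)
    finally show "exp (- lam) * c / a * eps powr a
        \<le> (LINT u:{0<..<eps}|lborel. exp (- lam * u) * pi_RSB a b u)" .
    have "(LINT u:{0<..<eps}|lborel. exp (- lam * u) * pi_RSB a b u)
        \<le> (LINT u:{0<..<eps}|lborel. C * u powr (a - 1))"
    proof (rule set_integral_mono)
      fix u assume u: "u \<in> {0<..<eps}"
      have "exp (- lam * u) * pi_RSB a b u \<le> 1 * (C * u powr (a - 1))"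
        using C(2)[of u] u eps assms pi_RSB_nonneg by (intro mult_mono) auto
      then show "exp (- lam * u) * pi_RSB a b u \<le> C * u powr (a - 1)"
        by simp
    qed (use int powr eps assms in simp_all)
    also have "\<dots> = C / a * eps powr a"
      using powr(2) eps assms by simp
    finally show "(LINT u:{0<..<eps}|lborel. exp (- lam * u) * pi_RSB a b u) \<le> C / a * eps powr a" .
  qed
qed

lemma prior_lap_nonneg:
  "0 < a \<Longrightarrow> 0 < b \<Longrightarrow> 0 \<le> s \<Longrightarrow> s \<le> 1 \<Longrightarrow> 0 \<le> prior_lap a b s lam A"
  unfolding prior_lap_def using set_integral_exp_pi_RSB_nonneg[of a b] by simp

lemma set_integral_exp_pi_RSB_split:
  fixes a b lam eps :: real
  assumes "0 < a" "0 < b" "0 < lam" "0 < eps"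
  shows "(LINT u:{0<..}|lborel. exp (- lam * u) * pi_RSB a b u)
    = (LINT u:{0<..<eps}|lborel. exp (- lam * u) * pi_RSB a b u)
      + (LINT u:{eps..}|lborel. exp (- lam * u) * pi_RSB a b u)"
proof -
  have U: "{0<..} = {0<..<eps} \<union> {eps..}"
    using assms(4) by (simp add: ivl_disj_un_one(6))
  show ?thesis
    unfolding U using assms by (intro set_integral_Un set_integrable_exp_pi_RSB) auto
qed

lemma prior_lap_split:
  fixes a b lam eps :: real
  assumes "0 < a" "0 < b" "0 < lam" "0 < eps"
  shows "prior_lap a b s lam {0<..} = prior_lap a b s lam {0<..<eps} + prior_lap a b s lam {eps..}"
  using set_integral_exp_pi_RSB_split[OF assms] assms(4)
  unfolding prior_lap_def by (auto simp: algebra_simps)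

lemma prior_lap_pos:
  fixes a b s lam :: real
  assumes "0 < a" "0 < b" "0 \<le> s" "s \<le> 1" "0 < lam"
  shows "0 < prior_lap a b s lam {0<..}"
proof -
  obtain c C where c: "0 < c"
    "\<And>eps. 0 < eps \<Longrightarrow> eps \<le> 1 \<Longrightarrow>
      c * eps powr a \<le> (LINT u:{0<..<eps}|lborel. exp (- lam * u) * pi_RSB a b u)"
    and "0 < C" "\<And>eps. 0 < eps \<Longrightarrow> eps \<le> 1 \<Longrightarrow>
      (LINT u:{0<..<eps}|lborel. exp (- lam * u) * pi_RSB a b u) \<le> C * eps powr a"
    by (rule laplace_pi_RSB_near_zero[OF assms(1,2,5)]) (rule that)
  have "0 < (LINT u:{0<..<1}|lborel. exp (- lam * u) * pi_RSB a b u)"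
    using c(1) c(2)[of 1] by simp
  also have "\<dots> \<le> (LINT u:{0<..}|lborel. exp (- lam * u) * pi_RSB a b u)"
    using set_integral_exp_pi_RSB_split[OF assms(1,2,5) zero_less_one]
      set_integral_exp_pi_RSB_nonneg[OF assms(1,2), of "{1..}" lam] by linarith
  finally show ?thesis
    using assms by (cases "s < 1") (auto simp: prior_lap_def intro: add_pos_nonneg add_nonneg_pos)
qed

definition prior_integral :: "real \<Rightarrow> real \<Rightarrow> real \<Rightarrow> (real \<Rightarrow> real) \<Rightarrow> real set \<Rightarrow> real" where
  "prior_integral a b s g A =
     (1 - s) * (if (1::real) \<in> A then g 1 else 0) + s * (LINT u:A|lborel. g u * pi_RSB a b u)"

lemma prior_lap_eq_prior_integral:
  "prior_lap a b s lam A = prior_integral a b s (\<lambda>u. exp (- lam * u)) A"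
  by (simp add: prior_lap_def prior_integral_def)

lemma prior_integral_cmult:
  "prior_integral a b s (\<lambda>u. c * g u) A = c * prior_integral a b s g A"
  by (simp add: prior_integral_def mult.assoc algebra_simps)

lemma prior_integral_mono:
  fixes a b s :: real
  assumes "0 < a" "0 < b" "0 \<le> s" "s \<le> 1"
    and "set_integrable lborel A (\<lambda>u. g u * pi_RSB a b u)"
    and "set_integrable lborel A (\<lambda>u. h u * pi_RSB a b u)"
    and "\<And>u. u \<in> A \<Longrightarrow> g u \<le> h u"
  shows "prior_integral a b s g A \<le> prior_integral a b s h A"
proof -
  have "(LINT u:A|lborel. g u * pi_RSB a b u) \<le> (LINT u:A|lborel. h u * pi_RSB a b u)"
    using assms pi_RSB_nonneg by (intro set_integral_mono mult_right_mono) auto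
  then show ?thesis
    unfolding prior_integral_def using assms by (intro add_mono mult_left_mono) auto
qed

lemma exp_tilt_lower:
  fixes l1 l2 u eps :: real
  assumes "l1 \<le> l2" "u \<le> eps"
  shows "exp (- (l2 - l1) * eps) * exp (- l1 * u) \<le> exp (- l2 * u)"
proof -
  have "(l2 - l1) * u \<le> (l2 - l1) * eps"
    using assms by (intro mult_left_mono) auto
  then show ?thesis
    by (simp flip: exp_add add: algebra_simps)
qed

lemma exp_tilt_upper:
  fixes l1 l2 u eps :: real
  assumes "l1 \<le> l2" "eps \<le> u"
  shows "exp (- l2 * u) \<le> exp (- (l2 - l1) * eps) * exp (- l1 * u)"
proof -
  have "(l2 - l1) * eps \<le> (l2 - l1) * u"
    using assms by (intro mult_left_mono) auto
  then show ?thesis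
    by (simp flip: exp_add add: algebra_simps)
qed

lemma frac_sum_mono:
  fixes n1 m1 n2 m2 c :: real
  assumes "0 \<le> n1" "0 \<le> m1" "0 < n1 + m1" "0 < n2 + m2" "c * n1 \<le> n2" "m2 \<le> c * m1"
  shows "n1 / (n1 + m1) \<le> n2 / (n2 + m2)"
proof -
  have "n1 * m2 \<le> n1 * (c * m1)"
    using assms by (intro mult_left_mono) auto
  also have "\<dots> = (c * n1) * m1"
    by simp
  also have "\<dots> \<le> n2 * m1"
    using assms by (intro mult_right_mono) auto
  finally have "n1 * (n2 + m2) \<le> n2 * (n1 + m1)"
    by (simp add: algebra_simps)
  then show ?thesis
    using assms by (simp add: divide_simps)
qed

lemma post_prob_mono:
  fixes a b s eps :: real
  assumes "0 < a" "0 < b" "0 \<le> s" "s \<le> 1" "0 < eps"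
  shows "mono_on {0<..} (\<lambda>lam. post_prob a b s eps lam)"
proof (rule mono_onI)
  fix l1 l2 :: real
  assume l: "l1 \<in> {0<..}" "l2 \<in> {0<..}" "l1 \<le> l2"
  define c where "c = exp (- (l2 - l1) * eps)"
  define N where "N l = prior_lap a b s l {0<..<eps}" for l
  define M where "M l = prior_lap a b s l {eps..}" for l
  have integrable: "set_integrable lborel A (\<lambda>u. k * exp (- l * u) * pi_RSB a b u)"
    if "l \<in> {0<..}" "A \<subseteq> {0<..}" "A \<in> sets borel" for k l A
    using set_integrable_exp_pi_RSB[of a b l A] assms that by (simp add: mult.assoc)
  have "c * N l1 = prior_integral a b s (\<lambda>u. c * exp (- l1 * u)) {0<..<eps}"
    by (simp add: N_def prior_lap_eq_prior_integral prior_integral_cmult)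
  also have "\<dots> \<le> prior_integral a b s (\<lambda>u. exp (- l2 * u)) {0<..<eps}"
    using exp_tilt_lower[OF l(3)] assms l
    by (intro prior_integral_mono integrable set_integrable_exp_pi_RSB) (auto simp: c_def)
  finally have N: "c * N l1 \<le> N l2"
    by (simp add: N_def prior_lap_eq_prior_integral)
  have "M l2 = prior_integral a b s (\<lambda>u. exp (- l2 * u)) {eps..}"
    by (simp add: M_def prior_lap_eq_prior_integral)
  also have "\<dots> \<le> prior_integral a b s (\<lambda>u. c * exp (- l1 * u)) {eps..}"
    using exp_tilt_upper[OF l(3)] assms l
    by (intro prior_integral_mono integrable set_integrable_exp_pi_RSB) (auto simp: c_def)
  finally have M: "M l2 \<le> c * M l1"
    by (simp add: M_def prior_lap_eq_prior_integral prior_integral_cmult)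
  have D: "prior_lap a b s l {0<..} = N l + M l" if "l \<in> {0<..}" for l
    using prior_lap_split[of a b l eps s] assms that by (simp add: N_def M_def)
  have "N l1 / (N l1 + M l1) \<le> N l2 / (N l2 + M l2)"
  proof (rule frac_sum_mono[OF _ _ _ _ N M])
    show "0 \<le> N l1" "0 \<le> M l1"
      using assms prior_lap_nonneg by (simp_all add: N_def M_def)
    show "0 < N l1 + M l1" "0 < N l2 + M l2"
      using assms l prior_lap_pos D by (metis greaterThan_iff)+
  qed
  then show "post_prob a b s eps l1 \<le> post_prob a b s eps l2"
    using D l by (simp add: post_prob_def N_def)
qed

lemma post_prob_eq_of_le_one:
  "eps \<le> 1 \<Longrightarrow> post_prob a b s eps lam
    = s * (LINT u:{0<..<eps}|lborel. exp (- lam * u) * pi_RSB a b u) / prior_lap a b s lam {0<..}"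
  by (simp add: post_prob_def prior_lap_def)

lemma post_prob_ratio_tendsto_at_top:
  fixes a a' b s lam :: real
  assumes "0 < a" "a < a'" "0 < b" "0 < s" "s \<le> 1" "0 < lam"
  shows "filterlim (\<lambda>eps. post_prob a b s eps lam / post_prob a' b s eps lam) at_top (at_right 0)"
proof -
  let ?I = "\<lambda>a eps. LINT u:{0<..<eps}|lborel. exp (- lam * u) * pi_RSB a b u"
  have a': "0 < a'"
    using assms by simp
  obtain c C where c: "0 < c" "\<And>eps. 0 < eps \<Longrightarrow> eps \<le> 1 \<Longrightarrow> c * eps powr a \<le> ?I a eps"
    and "0 < C" "\<And>eps. 0 < eps \<Longrightarrow> eps \<le> 1 \<Longrightarrow> ?I a eps \<le> C * eps powr a"
    by (rule laplace_pi_RSB_near_zero[OF assms(1,3,6)]) (rule that)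
  obtain c' C' where c': "0 < c'" "\<And>eps. 0 < eps \<Longrightarrow> eps \<le> 1 \<Longrightarrow> c' * eps powr a' \<le> ?I a' eps"
    and C': "0 < C'" "\<And>eps. 0 < eps \<Longrightarrow> eps \<le> 1 \<Longrightarrow> ?I a' eps \<le> C' * eps powr a'"
    by (rule laplace_pi_RSB_near_zero[OF a' assms(3,6)]) (rule that)
  define D where "D a = prior_lap a b s lam {0<..}" for a
  have D: "0 < D a" "0 < D a'"
    using prior_lap_pos assms a' by (simp_all add: D_def)
  define K where "K = c * D a' / (C' * D a)"
  have K: "0 < K"
    using c C' D by (simp add: K_def)
  have "\<forall>\<^sub>F eps in at_right 0. eps \<in> {0<..<1::real}"
    by (rule eventually_at_rightI[of 0 1]) auto
  then have bound: "\<forall>\<^sub>F eps in at_right 0.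
      K * eps powr (a - a') \<le> post_prob a b s eps lam / post_prob a' b s eps lam"
  proof (rule eventually_mono)
    fix eps :: real
    assume eps: "eps \<in> {0<..<1}"
    have I: "c * eps powr a \<le> ?I a eps" "c' * eps powr a' \<le> ?I a' eps" "?I a' eps \<le> C' * eps powr a'"
      using c(2) c'(2) C'(2) eps by auto
    have "0 < c' * eps powr a'"
      using eps c'(1) by simp
    then have pos: "0 < eps powr a" "0 < ?I a' eps"
      using eps I(2) by auto
    have "K * eps powr (a - a') = (c * eps powr a * D a') / (C' * eps powr a' * D a)"
      using pos eps by (simp add: K_def powr_diff mult_ac)
    also have "\<dots> \<le> (?I a eps * D a') / (?I a' eps * D a)"
    proof (rule frac_le)
      show "0 \<le> ?I a eps * D a'"
        using I(1) c(1) pos(1) D(2) by (intro mult_nonneg_nonneg) (auto intro: order.trans[rotated])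
      show "c * eps powr a * D a' \<le> ?I a eps * D a'"
        using I(1) D(2) by (intro mult_right_mono) auto
      show "0 < ?I a' eps * D a"
        using pos(2) D(1) by simp
      show "?I a' eps * D a \<le> C' * eps powr a' * D a"
        using I(3) D(1) by (intro mult_right_mono) auto
    qed
    also have "\<dots> = post_prob a b s eps lam / post_prob a' b s eps lam"
      using eps assms by (simp add: post_prob_eq_of_le_one D_def)
    finally show "K * eps powr (a - a') \<le> post_prob a b s eps lam / post_prob a' b s eps lam" .
  qed
  have "filterlim (\<lambda>eps::real. eps powr (a - a')) at_top (at_right 0)"
    using assms by real_asymp
  then have "filterlim (\<lambda>eps::real. K * eps powr (a - a')) at_top (at_right 0)"
    by (rule filterlim_tendsto_pos_mult_at_top[OF tendsto_const K])
  then show ?thesis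
    by (rule filterlim_at_top_mono[OF _ bound])
qed

theorem theorem2:
  shows "(\<forall>a b s eps. 0 < a \<longrightarrow> 0 < b \<longrightarrow> 0 < s \<longrightarrow> s < 1 \<longrightarrow> 0 < eps \<longrightarrow>
            mono_on {0<..} (\<lambda>lam. post_prob a b s eps lam))
       \<and> (\<forall>a a' b s lam. 0 < a \<longrightarrow> a < 1 \<longrightarrow> 1 < a' \<longrightarrow> 0 < b \<longrightarrow> 0 < s \<longrightarrow> s \<le> 1 \<longrightarrow> 0 < lam \<longrightarrow>
            filterlim (\<lambda>eps. post_prob a b s eps lam / post_prob a' b s eps lam) at_top (at_right 0))"
proof (intro conjI allI impI)
  fix a b s eps :: real
  assume "0 < a" "0 < b" "0 < s" "s < 1" "0 < eps"
  then show "mono_on {0<..} (\<lambda>lam. post_prob a b s eps lam)"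
    by (intro post_prob_mono) auto
next
  fix a a' b s lam :: real
  assume "0 < a" "a < 1" "1 < a'" "0 < b" "0 < s" "s \<le> 1" "0 < lam"
  then show "filterlim (\<lambda>eps. post_prob a b s eps lam / post_prob a' b s eps lam) at_top (at_right 0)"
    by (intro post_prob_ratio_tendsto_at_top) auto
qed

end
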